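(* For every integer $m\geq 1$, the graph $\mathcal{G}^1_{6m+1}$ is transmission irregular.
   Context: Let $G_1$ be the graph with vertices $a,b,c,d,e$ and edges $ab,ac,ad,bc,cd,de$. For an integer $n\ge 2$, $\mathcal{G}^1_n$ is obtained from $G_1$ by adding a new path from $a$ to $b$ with $n$ new internal vertices (i.e. a path $a,x_1,\dots,x_n,b$ of length $n+1$, where the $x_i$ are new vertices). The transmission of a vertex $u$ in a connected graph $G$ is $Tr_G(u)=\sum_{v}d_G(u,v)$; a graph is transmission irregular if no two of its vertices have equal transmission. *)

theory Defs
  imports Main
begin

definition is_walk :: "'a set \<Rightarrow> ('a \<Rightarrow> 'a \<Rightarrow> bool) \<Rightarrow> 'a list \<Rightarrow> bool" where
  "is_walk V Ed p \<longleftrightarrow> p \<noteq> [] \<and> set p \<subseteq> V \<and>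
     (\<forall>i. i + 1 < length p \<longrightarrow> Ed (p ! i) (p ! (i + 1)))"

definition gdist :: "'a set \<Rightarrow> ('a \<Rightarrow> 'a \<Rightarrow> bool) \<Rightarrow> 'a \<Rightarrow> 'a \<Rightarrow> nat" where
  "gdist V Ed u v = (LEAST k. \<exists>p. is_walk V Ed p \<and> hd p = u \<and> last p = v \<and> length p = k + 1)"

definition transmission :: "'a set \<Rightarrow> ('a \<Rightarrow> 'a \<Rightarrow> bool) \<Rightarrow> 'a \<Rightarrow> nat" where
  "transmission V Ed u = (\<Sum>v\<in>V. gdist V Ed u v)"

definition transmission_irregular :: "'a set \<Rightarrow> ('a \<Rightarrow> 'a \<Rightarrow> bool) \<Rightarrow> bool" where
  "transmission_irregular V Ed \<longleftrightarrow> inj_on (transmission V Ed) V"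

datatype gvert = Va | Vb | Vc | Vd | Ve | X nat

definition G1n_verts :: "nat \<Rightarrow> gvert set" where
  "G1n_verts n = {Va, Vb, Vc, Vd, Ve} \<union> X ` {1..n}"

definition G1n_edge0 :: "nat \<Rightarrow> gvert \<Rightarrow> gvert \<Rightarrow> bool" where
  "G1n_edge0 n u v \<longleftrightarrow>
     (u, v) \<in> {(Va, Vb), (Va, Vc), (Va, Vd), (Vb, Vc), (Vc, Vd), (Vd, Ve), (Va, X 1), (X n, Vb)}
     \<or> (\<exists>i. 1 \<le> i \<and> i < n \<and> u = X i \<and> v = X (i + 1))"

definition G1n_adj :: "nat \<Rightarrow> gvert \<Rightarrow> gvert \<Rightarrow> bool" where
  "G1n_adj n u v \<longleftrightarrow> G1n_edge0 n u v \<or> G1n_edge0 n v u"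

end

theory Submission
  imports Defs
begin

text \<open>The vertices a, X 1, ..., X n, b form a cycle of length L = n + 2 (closed by the
  edge ab); c is adjacent to a and b, d to a and c, and e only to d. Distances from a
  cycle vertex are certified by an explicit potential (the cyclic distance, extended to
  c, d, e), and distances from c, d, e then follow by symmetry. Since the sum of the
  cyclic distances from a position p does not depend on p, for odd L = 2k + 1 every
  transmission is k(k + 1) + 4 plus an excess: 3p resp. 3(2k - p) + 2 for the cycle
  vertex at position p \<le> k resp. p > k, and k, 2k - 1, 4k + 1 for c, d, e. The cycle
  excesses are pairwise distinct, at most 3k and never 1 mod 3, so all transmissions
  differ as soon as k \<equiv> 1 (mod 3) and k > 1, that is, n = 6m + 1.\<close>

lemma walk_potential_le:
  assumes walk: "is_walk V Ed p" and start: "h (hd p) = 0"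
    and lip: "\<And>x y. x \<in> V \<Longrightarrow> y \<in> V \<Longrightarrow> Ed x y \<Longrightarrow> h y \<le> h x + 1"
  shows "h (last p) \<le> length p - 1"
proof -
  have ne: "p \<noteq> []" and sub: "set p \<subseteq> V"
    and step: "\<And>i. i + 1 < length p \<Longrightarrow> Ed (p ! i) (p ! (i + 1))"
    using walk unfolding is_walk_def by auto
  have "h (p ! i) \<le> i" if "i < length p" for i
    using that
  proof (induction i)
    case 0
    then show ?case using ne start by (simp add: hd_conv_nth)
  next
    case (Suc i)
    have "h (p ! (i + 1)) \<le> h (p ! i) + 1"
      using lip[OF _ _ step] sub Suc.prems by (simp add: subset_iff)
    then show ?case using Suc by simp
  qed
  then show ?thesis using ne by (simp add: last_conv_nth)
qed

lemma walk_from_potential: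
  assumes u: "u \<in> V" and start: "h u = 0"
    and pred: "\<And>v. v \<in> V \<Longrightarrow> v \<noteq> u \<Longrightarrow> \<exists>w\<in>V. Ed w v \<and> h w + 1 = h v"
    and v: "v \<in> V"
  shows "\<exists>p. is_walk V Ed p \<and> hd p = u \<and> last p = v \<and> length p = h v + 1"
  using v
proof (induction "h v" arbitrary: v)
  case 0
  then have "v = u" using pred by fastforce
  then show ?case using u start by (intro exI[of _ "[u]"]) (simp add: is_walk_def)
next
  case (Suc k)
  then have "v \<noteq> u" using start by auto
  then obtain w where w: "w \<in> V" "Ed w v" "h w + 1 = h v" using pred Suc.prems by blast
  then obtain p where p: "is_walk V Ed p" "hd p = u" "last p = w" "length p = h w + 1"
    using Suc.hyps by force
  have "is_walk V Ed (p @ [v])"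
    unfolding is_walk_def
  proof (intro conjI allI impI)
    show "set (p @ [v]) \<subseteq> V" using p(1) Suc.prems by (auto simp: is_walk_def)
    fix i assume i: "i + 1 < length (p @ [v])"
    show "Ed ((p @ [v]) ! i) ((p @ [v]) ! (i + 1))"
    proof (cases "i + 1 < length p")
      case True
      then show ?thesis using p(1) by (simp add: is_walk_def nth_append)
    next
      case False
      then have "i = length p - 1" using i by simp
      then show ?thesis using w(2) p(1,3) by (auto simp: is_walk_def nth_append last_conv_nth)
    qed
  qed simp
  then show ?case using p w by (intro exI[of _ "p @ [v]"]) (simp add: is_walk_def)
qed

lemma gdist_eqI:
  assumes u: "u \<in> V" and v: "v \<in> V" and start: "h u = 0"
    and lip: "\<And>x y. x \<in> V \<Longrightarrow> y \<in> V \<Longrightarrow> Ed x y \<Longrightarrow> h y \<le> h x + 1"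
    and pred: "\<And>v. v \<in> V \<Longrightarrow> v \<noteq> u \<Longrightarrow> \<exists>w\<in>V. Ed w v \<and> h w + 1 = h v"
  shows "gdist V Ed u v = h v"
  unfolding gdist_def
proof (rule Least_equality)
  show "\<exists>p. is_walk V Ed p \<and> hd p = u \<and> last p = v \<and> length p = h v + 1"
    using walk_from_potential[OF u start pred v] .
next
  fix k assume "\<exists>p. is_walk V Ed p \<and> hd p = u \<and> last p = v \<and> length p = k + 1"
  then obtain p where "is_walk V Ed p" "hd p = u" "last p = v" "length p = k + 1" by blast
  then show "h v \<le> k" using walk_potential_le[of V Ed p h] start lip by fastforce
qed

lemma gdist_self: "u \<in> V \<Longrightarrow> gdist V Ed u u = 0"
  unfolding gdist_def by (intro Least_eq_0 exI[of _ "[u]"]) (simp add: is_walk_def)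

lemma gdist_eq_1:
  assumes "u \<in> V" "v \<in> V" "Ed u v" "u \<noteq> v"
  shows "gdist V Ed u v = 1"
  unfolding gdist_def
proof (rule Least_equality)
  show "\<exists>p. is_walk V Ed p \<and> hd p = u \<and> last p = v \<and> length p = 1 + 1"
    using assms by (intro exI[of _ "[u, v]"]) (simp add: is_walk_def)
next
  fix k assume "\<exists>p. is_walk V Ed p \<and> hd p = u \<and> last p = v \<and> length p = k + 1"
  then show "1 \<le> k" using assms by (cases k) (auto simp: length_Suc_conv)
qed

lemma gdist_eq_2:
  assumes "u \<in> V" "v \<in> V" "w \<in> V" "Ed u w" "Ed w v" "u \<noteq> v" "\<not> Ed u v"
  shows "gdist V Ed u v = 2"
  unfolding gdist_def
proof (rule Least_equality)
  show "\<exists>p. is_walk V Ed p \<and> hd p = u \<and> last p = v \<and> length p = 2 + 1"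
    using assms by (intro exI[of _ "[u, w, v]"]) (auto simp: is_walk_def less_Suc_eq nth_Cons')
next
  fix k assume "\<exists>p. is_walk V Ed p \<and> hd p = u \<and> last p = v \<and> length p = k + 1"
  then obtain p where p: "is_walk V Ed p" "hd p = u" "last p = v" "length p = k + 1" by blast
  show "2 \<le> k"
  proof (rule ccontr)
    assume "\<not> 2 \<le> k"
    then consider "k = 0" | "k = 1" by linarith
    then show False
    proof cases
      case 1
      then show False using p assms by (auto simp: length_Suc_conv)
    next
      case 2
      then obtain x y where "p = [x, y]" using p(4) by (auto simp: length_Suc_conv)
      then show False using p assms by (auto simp: is_walk_def)
    qed
  qed
qed

lemma is_walk_rev:
  assumes walk: "is_walk V Ed p" and sym: "\<And>x y. Ed x y \<Longrightarrow> Ed y x"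
  shows "is_walk V Ed (rev p)"
proof -
  have "Ed (rev p ! i) (rev p ! (i + 1))" if i: "i + 1 < length p" for i
  proof -
    define j where "j = length p - (i + 2)"
    have j: "j + 1 < length p" "rev p ! i = p ! (j + 1)" "rev p ! (i + 1) = p ! j"
      using i by (auto simp: rev_nth j_def Suc_diff_Suc)
    have "Ed (p ! j) (p ! (j + 1))" using walk j(1) by (simp add: is_walk_def)
    then show ?thesis using j(2,3) sym by simp
  qed
  then show ?thesis using walk by (simp add: is_walk_def)
qed

lemma gdist_sym:
  assumes sym: "\<And>x y. Ed x y \<Longrightarrow> Ed y x"
  shows "gdist V Ed u v = gdist V Ed v u"
proof -
  have reversed: "\<exists>p'. is_walk V Ed p' \<and> hd p' = y \<and> last p' = x \<and> length p' = k + 1"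
    if "is_walk V Ed p" "hd p = x" "last p = y" "length p = k + 1" for p x y k
  proof (intro exI conjI)
    show "is_walk V Ed (rev p)" using is_walk_rev[OF that(1) sym] .
    have "p \<noteq> []" using that(1) by (simp add: is_walk_def)
    then show "hd (rev p) = y" "last (rev p) = x" "length (rev p) = k + 1"
      using that by (simp_all add: hd_rev last_rev)
  qed
  have "(\<lambda>k. \<exists>p. is_walk V Ed p \<and> hd p = u \<and> last p = v \<and> length p = k + 1)
      = (\<lambda>k. \<exists>p. is_walk V Ed p \<and> hd p = v \<and> last p = u \<and> length p = k + 1)"
    by (intro ext iffI) (elim exE conjE, erule reversed; assumption)+
  then show ?thesis unfolding gdist_def by simp
qed

text \<open>In truncated subtraction p - q + (q - p) is the absolute difference of p and q.\<close>

definition cyc_dist :: "nat \<Rightarrow> nat \<Rightarrow> nat \<Rightarrow> nat" where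
  "cyc_dist L p q = min (p - q + (q - p)) (L - (p - q + (q - p)))"

definition cyc_adj :: "nat \<Rightarrow> nat \<Rightarrow> nat \<Rightarrow> bool" where
  "cyc_adj L q q' \<longleftrightarrow>
     q' = q + 1 \<or> q = q' + 1 \<or> (q = 0 \<and> q' = L - 1) \<or> (q = L - 1 \<and> q' = 0)"

lemma cyc_adj_sym: "cyc_adj L q q' \<Longrightarrow> cyc_adj L q' q"
  by (auto simp: cyc_adj_def)

lemma cyc_dist_self [simp]: "cyc_dist L p p = 0"
  by (simp add: cyc_dist_def)

lemma cyc_dist_zero_right: "q < L \<Longrightarrow> cyc_dist L q 0 = min q (L - q)"
  by (simp add: cyc_dist_def)

lemma cyc_dist_Suc_le:
  assumes "p < L" "q + 1 < L"
  shows "cyc_dist L p (q + 1) \<le> cyc_dist L p q + 1"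
    and "cyc_dist L p q \<le> cyc_dist L p (q + 1) + 1"
  using assms by (cases "q < p"; simp add: cyc_dist_def min_def; arith)+

lemma cyc_dist_wrap_le:
  assumes "p < L"
  shows "cyc_dist L p (L - 1) \<le> cyc_dist L p 0 + 1"
    and "cyc_dist L p 0 \<le> cyc_dist L p (L - 1) + 1"
  using assms by (simp add: cyc_dist_def min_def; arith)+

lemma cyc_dist_adj_le:
  assumes "p < L" "q < L" "q' < L" "cyc_adj L q q'"
  shows "cyc_dist L p q' \<le> cyc_dist L p q + 1"
  using assms cyc_dist_Suc_le[of p L q] cyc_dist_Suc_le[of p L q'] cyc_dist_wrap_le[of p L]
  unfolding cyc_adj_def by auto

text \<open>The predecessor q' is the neighbour of q on a shortest arc from q to p; the six
  cases say on which side of p, and on which arc, q lies.\<close>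

lemma cyc_dist_pred:
  assumes "p < L" "q < L" "q \<noteq> p"
  shows "\<exists>q'<L. cyc_adj L q' q \<and> cyc_dist L p q' + 1 = cyc_dist L p q"
proof -
  consider "q < p" "2 * (p - q) \<le> L" | "0 < q" "q < p" "2 * (p - q) > L" | "q = 0" "2 * p > L"
    | "p < q" "2 * (q - p) \<le> L" | "p < q" "q + 1 < L" "2 * (q - p) > L"
    | "q = L - 1" "2 * (q - p) > L"
    using assms by linarith
  then show ?thesis
  proof cases
    case 1
    then show ?thesis
      using assms by (intro exI[of _ "q + 1"]) (auto simp: cyc_adj_def cyc_dist_def min_def)
  next
    case 2
    then show ?thesis
      using assms by (intro exI[of _ "q - 1"]) (auto simp: cyc_adj_def cyc_dist_def min_def)
  next
    case 3
    then show ?thesis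
      using assms by (intro exI[of _ "L - 1"]) (auto simp: cyc_adj_def cyc_dist_def min_def)
  next
    case 4
    then show ?thesis
      using assms by (intro exI[of _ "q - 1"]) (auto simp: cyc_adj_def cyc_dist_def min_def)
  next
    case 5
    then show ?thesis
      using assms by (intro exI[of _ "q + 1"]) (auto simp: cyc_adj_def cyc_dist_def min_def)
  next
    case 6
    then show ?thesis
      using assms by (intro exI[of _ 0]) (auto simp: cyc_adj_def cyc_dist_def min_def)
  qed
qed

lemma sum_cyc_dist_rotate:
  assumes p: "p < L"
  shows "(\<Sum>q<L. cyc_dist L p q) = (\<Sum>q<L. min q (L - q))"
proof -
  let ?g = "\<lambda>q. min q (L - q)"
  have "(\<Sum>q<L. cyc_dist L p q) = (\<Sum>q=0..<p. cyc_dist L p q) + (\<Sum>q=p..<L. cyc_dist L p q)"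
    using p by (simp add: lessThan_atLeast0 sum.atLeastLessThan_concat)
  also have "(\<Sum>q=0..<p. cyc_dist L p q) = (\<Sum>q=0..<p. ?g (q + (L - p)))"
    using p by (intro sum.cong) (auto simp: cyc_dist_def min_def)
  also have "\<dots> = (\<Sum>q=L-p..<L. ?g q)"
    using sum.shift_bounds_nat_ivl[of ?g 0 "L - p" p] p by simp
  also have "(\<Sum>q=p..<L. cyc_dist L p q) = (\<Sum>q=0..<L-p. cyc_dist L p (q + p))"
    using sum.shift_bounds_nat_ivl[of "cyc_dist L p" 0 p "L - p"] p by simp
  also have "\<dots> = (\<Sum>q=0..<L-p. ?g q)"
    by (intro sum.cong) (auto simp: cyc_dist_def)
  finally show ?thesis
    using p by (simp add: lessThan_atLeast0 sum.atLeastLessThan_concat add.commute)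
qed

lemma sum_lessThan_Suc_Suc:
  "(\<Sum>q<Suc (Suc n). f q) = f 0 + (\<Sum>q<n. f (Suc q)) + f (Suc n)"
  unfolding sum.lessThan_Suc[of f "Suc n"] sum.lessThan_Suc_shift[of f n] ..

text \<open>In the induction step every old summand grows by one after an index shift, as
  min (q + 1) (m + 2 - (q + 1)) = min q (m - q) + 1; the new end terms are 0 and 1 resp. 0.\<close>

lemma sum_min_odd: "(\<Sum>q<2 * k + 1. min q (2 * k + 1 - q)) = k * (k + 1)" for k :: nat
proof (induction k)
  case (Suc k)
  have "2 * Suc k + 1 = Suc (Suc (2 * k + 1))" by simp
  then have "(\<Sum>q<2 * Suc k + 1. min q (2 * Suc k + 1 - q))
      = (\<Sum>q<2 * k + 1. min q (2 * k + 1 - q) + 1) + 1"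
    by (simp only: sum_lessThan_Suc_Suc) (simp del: sum.lessThan_Suc, rule sum.cong, auto)
  then show ?case using Suc by (simp add: sum_Suc del: sum.lessThan_Suc)
qed simp

lemma sum_min_odd_pred: "(\<Sum>q<2 * k + 1. min q (2 * k - q)) = k * k" for k :: nat
proof (induction k)
  case (Suc k)
  have "2 * Suc k + 1 = Suc (Suc (2 * k + 1))" by simp
  then have "(\<Sum>q<2 * Suc k + 1. min q (2 * Suc k - q))
      = (\<Sum>q<2 * k + 1. min q (2 * k - q) + 1)"
    by (simp only: sum_lessThan_Suc_Suc) (simp del: sum.lessThan_Suc, rule sum.cong, auto)
  then show ?case using Suc by (simp add: sum_Suc del: sum.lessThan_Suc)
qed simp

definition cycle_excess :: "nat \<Rightarrow> nat \<Rightarrow> nat" where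
  "cycle_excess k p = (if p \<le> k then 3 * p else 3 * (2 * k - p) + 2)"

lemma cyc_dist_ends_eq_cycle_excess:
  assumes "p < 2 * k + 1"
  shows "2 * cyc_dist (2 * k + 1) p 0
      + min (cyc_dist (2 * k + 1) p 0) (cyc_dist (2 * k + 1) p (2 * k)) = cycle_excess k p"
proof (cases "p \<le> k")
  case True
  then show ?thesis by (simp add: cyc_dist_def cycle_excess_def min_def; arith)
next
  case False
  then show ?thesis using assms by (simp add: cyc_dist_def cycle_excess_def min_def; arith)
qed

lemma inj_on_cycle_excess: "inj_on (cycle_excess k) {..<2 * k + 1}"
proof -
  have "3 * a \<noteq> 3 * b + (2::nat)" "3 * b + 2 \<noteq> 3 * (a::nat)" for a b
    by presburger+
  then show ?thesis by (auto simp: inj_on_def cycle_excess_def split: if_splits)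
qed

lemma cycle_excess_mod_3: "cycle_excess k p mod 3 \<noteq> 1"
  by (simp add: cycle_excess_def mod_Suc)

lemma cycle_excess_le: "p < 2 * k + 1 \<Longrightarrow> cycle_excess k p \<le> 3 * k"
  by (simp add: cycle_excess_def; arith)

definition cycle_vertex :: "nat \<Rightarrow> nat \<Rightarrow> gvert" where
  "cycle_vertex n q = (if q = 0 then Va else if q = n + 1 then Vb else X q)"

lemma cycle_vertex_ne [simp]:
  "cycle_vertex n q \<noteq> Vc" "cycle_vertex n q \<noteq> Vd" "cycle_vertex n q \<noteq> Ve"
  by (simp_all add: cycle_vertex_def)

lemma inj_on_cycle_vertex: "inj_on (cycle_vertex n) {..<n + 2}"
  by (auto simp: inj_on_def cycle_vertex_def)

lemma G1n_verts_eq: "G1n_verts n = {Vc, Vd, Ve} \<union> cycle_vertex n ` {..<n + 2}"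
proof -
  have "X i \<in> cycle_vertex n ` {..<n + 2}" if "i \<in> {1..n}" for i
    using that by (intro image_eqI[of _ _ i]) (auto simp: cycle_vertex_def)
  moreover have "Va = cycle_vertex n 0" "Vb = cycle_vertex n (n + 1)"
    by (simp_all add: cycle_vertex_def)
  ultimately show ?thesis
    unfolding G1n_verts_def by (auto simp: cycle_vertex_def)
qed

lemma G1n_verts_cases:
  assumes "v \<in> G1n_verts n"
  obtains "v = Vc" | "v = Vd" | "v = Ve" | q where "q < n + 2" "v = cycle_vertex n q"
  using assms unfolding G1n_verts_eq by auto

lemma sum_G1n_verts:
  "(\<Sum>v\<in>G1n_verts n. f v) = f Vc + f Vd + f Ve + (\<Sum>q<n + 2. f (cycle_vertex n q))"
proof -
  have "(\<Sum>v\<in>G1n_verts n. f v)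
      = (\<Sum>v\<in>{Vc, Vd, Ve}. f v) + (\<Sum>v\<in>cycle_vertex n ` {..<n + 2}. f v)"
    unfolding G1n_verts_eq by (rule sum.union_disjoint) (auto simp: cycle_vertex_def)
  also have "(\<Sum>v\<in>cycle_vertex n ` {..<n + 2}. f v) = (\<Sum>q<n + 2. f (cycle_vertex n q))"
    by (rule sum.reindex[OF inj_on_cycle_vertex, unfolded comp_def])
  finally show ?thesis by (simp add: add.assoc)
qed

lemma G1n_adj_sym: "G1n_adj n x y \<Longrightarrow> G1n_adj n y x"
  by (auto simp: G1n_adj_def)

lemma G1n_adj_cycle_vertex:
  assumes "1 \<le> n" "q < n + 2" "q' < n + 2" "cyc_adj (n + 2) q q'"
  shows "G1n_adj n (cycle_vertex n q) (cycle_vertex n q')"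
  using assms unfolding cyc_adj_def G1n_adj_def G1n_edge0_def cycle_vertex_def by auto

lemma G1n_edge0_cases:
  assumes n: "1 \<le> n" and edge: "G1n_edge0 n x y"
  obtains q q' where "q < n + 2" "q' < n + 2" "x = cycle_vertex n q" "y = cycle_vertex n q'"
      "cyc_adj (n + 2) q q'"
    | "(x, y) \<in> {(Va, Vc), (Va, Vd), (Vb, Vc), (Vc, Vd), (Vd, Ve)}"
proof -
  have X: "X i = cycle_vertex n i" if "1 \<le> i" "i \<le> n" for i
    using that by (simp add: cycle_vertex_def)
  have ends: "Va = cycle_vertex n 0" "Vb = cycle_vertex n (n + 1)"
    by (simp_all add: cycle_vertex_def)
  from edge consider "(x, y) \<in> {(Va, Vc), (Va, Vd), (Vb, Vc), (Vc, Vd), (Vd, Ve)}"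
    | "x = Va" "y = Vb" | "x = Va" "y = X 1" | "x = X n" "y = Vb"
    | i where "1 \<le> i" "i < n" "x = X i" "y = X (i + 1)"
    unfolding G1n_edge0_def by auto
  then show ?thesis
  proof cases
    case 2
    then show ?thesis using that(1)[of 0 "n + 1"] ends by (simp add: cyc_adj_def)
  next
    case 3
    then show ?thesis using that(1)[of 0 1] ends X[of 1] n by (simp add: cyc_adj_def)
  next
    case 4
    then show ?thesis using that(1)[of n "n + 1"] ends X[of n] n by (simp add: cyc_adj_def)
  next
    case (5 i)
    then show ?thesis
      using that(1)[of i "i + 1"] X[of i] X[of "i + 1"] by (simp add: cyc_adj_def)
  qed (use that(2) in blast)
qed

lemma G1n_adj_cases:
  assumes adj: "G1n_adj n x y" and n: "1 \<le> n"
  obtains q q' where "q < n + 2" "q' < n + 2" "x = cycle_vertex n q" "y = cycle_vertex n q'"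
      "cyc_adj (n + 2) q q'"
    | "{x, y} \<in> {{Va, Vc}, {Va, Vd}, {Vb, Vc}, {Vc, Vd}, {Vd, Ve}}"
  using adj unfolding G1n_adj_def
proof
  assume "G1n_edge0 n x y"
  then show ?thesis
    by (rule G1n_edge0_cases[OF n]) (use that in auto)
next
  assume "G1n_edge0 n y x"
  then show ?thesis
    by (rule G1n_edge0_cases[OF n]) (use that cyc_adj_sym in \<open>auto simp: insert_commute\<close>)
qed

abbreviation G1n_dist :: "nat \<Rightarrow> gvert \<Rightarrow> gvert \<Rightarrow> nat" where
  "G1n_dist n \<equiv> gdist (G1n_verts n) (G1n_adj n)"

abbreviation G1n_transmission :: "nat \<Rightarrow> gvert \<Rightarrow> nat" where
  "G1n_transmission n \<equiv> transmission (G1n_verts n) (G1n_adj n)"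

lemma G1n_off_cycle_facts:
  shows "Vc \<in> G1n_verts n" "Vd \<in> G1n_verts n" "Ve \<in> G1n_verts n"
    and "G1n_adj n Vc Vd" "G1n_adj n Vd Vc" "G1n_adj n Vd Ve" "G1n_adj n Ve Vd"
      "\<not> G1n_adj n Vc Ve" "\<not> G1n_adj n Ve Vc"
  by (auto simp: G1n_verts_def G1n_adj_def G1n_edge0_def)

lemma G1n_dist_off_cycle [simp]:
  "G1n_dist n Vc Vc = 0" "G1n_dist n Vc Vd = 1" "G1n_dist n Vc Ve = 2"
  "G1n_dist n Vd Vc = 1" "G1n_dist n Vd Vd = 0" "G1n_dist n Vd Ve = 1"
  "G1n_dist n Ve Vc = 2" "G1n_dist n Ve Vd = 1" "G1n_dist n Ve Ve = 0"
  using G1n_off_cycle_facts by (simp_all add: gdist_self gdist_eq_1 gdist_eq_2[where w = Vd])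

definition dist_from_cycle :: "nat \<Rightarrow> nat \<Rightarrow> gvert \<Rightarrow> nat" where
  "dist_from_cycle n p v = (case v of
      Va \<Rightarrow> cyc_dist (n + 2) p 0
    | Vb \<Rightarrow> cyc_dist (n + 2) p (n + 1)
    | X i \<Rightarrow> cyc_dist (n + 2) p i
    | Vc \<Rightarrow> 1 + min (cyc_dist (n + 2) p 0) (cyc_dist (n + 2) p (n + 1))
    | Vd \<Rightarrow> 1 + cyc_dist (n + 2) p 0
    | Ve \<Rightarrow> 2 + cyc_dist (n + 2) p 0)"

lemma dist_from_cycle_cycle_vertex [simp]:
  "q < n + 2 \<Longrightarrow> dist_from_cycle n p (cycle_vertex n q) = cyc_dist (n + 2) p q"
  by (simp add: dist_from_cycle_def cycle_vertex_def)

lemma dist_from_cycle_off_cycle [simp]: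
  "dist_from_cycle n p Vc = 1 + min (cyc_dist (n + 2) p 0) (cyc_dist (n + 2) p (n + 1))"
  "dist_from_cycle n p Vd = 1 + cyc_dist (n + 2) p 0"
  "dist_from_cycle n p Ve = 2 + cyc_dist (n + 2) p 0"
  by (simp_all add: dist_from_cycle_def)

lemma gdist_cycle_vertex:
  assumes n: "1 \<le> n" and p: "p < n + 2" and v: "v \<in> G1n_verts n"
  shows "G1n_dist n (cycle_vertex n p) v = dist_from_cycle n p v"
proof (rule gdist_eqI[OF _ v])
  show "cycle_vertex n p \<in> G1n_verts n" "dist_from_cycle n p (cycle_vertex n p) = 0"
    using p by (simp_all add: G1n_verts_eq)
next
  fix x y assume "G1n_adj n x y"
  from this n show "dist_from_cycle n p y \<le> dist_from_cycle n p x + 1"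
  proof (cases rule: G1n_adj_cases)
    case (1 q q')
    then show ?thesis using cyc_dist_adj_le p by simp
  next
    case 2
    then show ?thesis
      using cyc_dist_wrap_le[of p "n + 2"] p by (auto simp: dist_from_cycle_def doubleton_eq_iff)
  qed
next
  have Vs: "Va \<in> G1n_verts n" "Vb \<in> G1n_verts n" "Vd \<in> G1n_verts n"
    by (simp_all add: G1n_verts_def)
  have adjs: "G1n_adj n Va Vc" "G1n_adj n Vb Vc" "G1n_adj n Va Vd" "G1n_adj n Vd Ve"
    by (simp_all add: G1n_adj_def G1n_edge0_def)
  fix v assume v: "v \<in> G1n_verts n" "v \<noteq> cycle_vertex n p"
  from v(1)
  show "\<exists>w\<in>G1n_verts n. G1n_adj n w v \<and> dist_from_cycle n p w + 1 = dist_from_cycle n p v"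
  proof (cases rule: G1n_verts_cases)
    case 1
    then show ?thesis using Vs adjs
      by (cases "cyc_dist (n + 2) p 0 \<le> cyc_dist (n + 2) p (n + 1)")
        (auto simp: dist_from_cycle_def min_def)
  next
    case 2
    then show ?thesis using Vs adjs by (auto simp: dist_from_cycle_def)
  next
    case 3
    then show ?thesis using Vs adjs by (auto simp: dist_from_cycle_def)
  next
    case (4 q)
    with v obtain q' where "q' < n + 2" "cyc_adj (n + 2) q' q"
      "cyc_dist (n + 2) p q' + 1 = cyc_dist (n + 2) p q"
      using cyc_dist_pred[OF p] by blast
    then show ?thesis using 4 n G1n_adj_cycle_vertex
      by (intro bexI[of _ "cycle_vertex n q'"]) (simp_all add: G1n_verts_eq)
  qed
qed

lemma gdist_to_cycle_vertex:
  assumes "1 \<le> n" "q < n + 2" "v \<in> G1n_verts n"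
  shows "G1n_dist n v (cycle_vertex n q) = dist_from_cycle n q v"
  using gdist_sym[of "G1n_adj n", OF G1n_adj_sym] gdist_cycle_vertex[OF assms] by simp

lemma transmission_cycle_vertex:
  assumes n: "1 \<le> n" and p: "p < n + 2"
  shows "G1n_transmission n (cycle_vertex n p) = (\<Sum>q<n + 2. min q (n + 2 - q)) + 4
    + 2 * cyc_dist (n + 2) p 0 + min (cyc_dist (n + 2) p 0) (cyc_dist (n + 2) p (n + 1))"
proof -
  have "G1n_transmission n (cycle_vertex n p) = (\<Sum>v\<in>G1n_verts n. dist_from_cycle n p v)"
    unfolding transmission_def by (simp add: gdist_cycle_vertex[OF n p])
  also have "\<dots> = (\<Sum>q<n + 2. cyc_dist (n + 2) p q) + 4
    + 2 * cyc_dist (n + 2) p 0 + min (cyc_dist (n + 2) p 0) (cyc_dist (n + 2) p (n + 1))"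
    unfolding sum_G1n_verts by (simp del: sum.lessThan_Suc)
  finally show ?thesis
    by (simp only: sum_cyc_dist_rotate[OF p])
qed

lemma transmission_off_cycle:
  assumes n: "1 \<le> n" and w: "w \<in> G1n_verts n"
  shows "G1n_transmission n w
    = G1n_dist n w Vc + G1n_dist n w Vd + G1n_dist n w Ve + (\<Sum>q<n + 2. dist_from_cycle n q w)"
  unfolding transmission_def sum_G1n_verts using gdist_to_cycle_vertex[OF n _ w] by simp

lemma transmission_Vc:
  assumes n: "1 \<le> n"
  shows "G1n_transmission n Vc = 3 + (n + 2) + (\<Sum>q<n + 2. min q (n + 1 - q))"
proof -
  have "dist_from_cycle n q Vc = Suc (min q (n + 1 - q))" if "q < n + 2" for q
    using that by (simp add: cyc_dist_def min_def)
  then show ?thesis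
    by (simp add: transmission_off_cycle[OF n] G1n_off_cycle_facts sum_Suc del: sum.lessThan_Suc)
qed

lemma transmission_Vd:
  assumes n: "1 \<le> n"
  shows "G1n_transmission n Vd = 2 + (n + 2) + (\<Sum>q<n + 2. min q (n + 2 - q))"
proof -
  have "dist_from_cycle n q Vd = Suc (min q (n + 2 - q))" if "q < n + 2" for q
    using that by (simp add: cyc_dist_zero_right)
  then show ?thesis
    by (simp add: transmission_off_cycle[OF n] G1n_off_cycle_facts sum_Suc del: sum.lessThan_Suc)
qed

lemma transmission_Ve:
  assumes n: "1 \<le> n"
  shows "G1n_transmission n Ve = 3 + 2 * (n + 2) + (\<Sum>q<n + 2. min q (n + 2 - q))"
proof -
  have "dist_from_cycle n q Ve = Suc (Suc (min q (n + 2 - q)))" if "q < n + 2" for q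
    using that by (simp add: cyc_dist_zero_right)
  then show ?thesis
    by (simp add: transmission_off_cycle[OF n] G1n_off_cycle_facts sum_Suc del: sum.lessThan_Suc)
qed

lemma transmission_G1n_odd:
  assumes L: "n + 2 = 2 * k + 1" and n: "1 \<le> n"
  shows "G1n_transmission n Vc = k * (k + 1) + 4 + k"
    and "G1n_transmission n Vd = k * (k + 1) + 4 + (2 * k - 1)"
    and "G1n_transmission n Ve = k * (k + 1) + 4 + (4 * k + 1)"
    and "p < 2 * k + 1 \<Longrightarrow>
      G1n_transmission n (cycle_vertex n p) = k * (k + 1) + 4 + cycle_excess k p"
proof -
  have n1: "n + 1 = 2 * k" and k: "1 \<le> k" using L n by simp_all
  show "G1n_transmission n Vc = k * (k + 1) + 4 + k"
    using transmission_Vc[OF n] unfolding L n1 sum_min_odd_pred by simp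
  show "G1n_transmission n Vd = k * (k + 1) + 4 + (2 * k - 1)"
    using transmission_Vd[OF n] k unfolding L sum_min_odd by simp
  show "G1n_transmission n Ve = k * (k + 1) + 4 + (4 * k + 1)"
    using transmission_Ve[OF n] unfolding L sum_min_odd by simp
  show "G1n_transmission n (cycle_vertex n p) = k * (k + 1) + 4 + cycle_excess k p"
    if "p < 2 * k + 1"
    using transmission_cycle_vertex[OF n, of p] that cyc_dist_ends_eq_cycle_excess[OF that]
    unfolding L n1 sum_min_odd by simp
qed

lemma transmission_irregular_G1n_odd:
  assumes L: "n + 2 = 2 * k + 1" and k: "k mod 3 = 1" "1 < k"
  shows "transmission_irregular (G1n_verts n) (G1n_adj n)"
proof -
  have n: "1 \<le> n" using L k(2) by simp
  let ?T = "G1n_transmission n" and ?c = "k * (k + 1) + 4"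
  note T = transmission_G1n_odd[OF L n]
  have "inj_on ?T {Vc, Vd, Ve}"
    using T(1-3) k(2) by auto
  moreover have "inj_on ?T (cycle_vertex n ` {..<2 * k + 1})"
    using inj_on_cycle_excess[of k] T(4) by (intro inj_on_imageI) (simp add: inj_on_def)
  moreover have "?T v \<noteq> ?T (cycle_vertex n p)"
    if v: "v \<in> {Vc, Vd, Ve}" and p: "p < 2 * k + 1" for v p
  proof -
    have "k = 3 * (k div 3) + 1" using div_mult_mod_eq[of k 3] k(1) by simp
    then have "2 * k - 1 = 3 * (2 * (k div 3)) + 1" by simp
    then have "(2 * k - 1) mod 3 = 1" by (simp add: mod_Suc)
    then have "?T (cycle_vertex n p) - ?c \<notin> {k, 2 * k - 1, 4 * k + 1}"
      using T(4)[OF p] cycle_excess_mod_3[of k p] cycle_excess_le[OF p] k by auto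
    moreover have "?T v - ?c \<in> {k, 2 * k - 1, 4 * k + 1}"
      using v T(1-3) by auto
    ultimately show ?thesis by metis
  qed
  then have "?T ` {Vc, Vd, Ve} \<inter> ?T ` cycle_vertex n ` {..<2 * k + 1} = {}"
    by fastforce
  ultimately show ?thesis
    unfolding transmission_irregular_def G1n_verts_eq L inj_on_Un by blast
qed

theorem proposition1:
  fixes m :: nat
  assumes "m \<ge> 1"
  shows "transmission_irregular (G1n_verts (6 * m + 1)) (G1n_adj (6 * m + 1))"
  by (rule transmission_irregular_G1n_odd[where k = "3 * m + 1"]) (use assms in auto)

end
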